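(* Let $\mathcal{X}'\subseteq\mathcal{X}$ be a set of pairwise backward kinematically inseparable observations. Then there exists a policy $\pi\in\Upsilon$ that maximizes $\mathbb{P}_\pi(x')$ over $\Upsilon$ simultaneously for all $x'\in\mathcal{X}'$. Further, this policy is an optimal policy (over $\Upsilon$) for the reward function $R'(x,a)=1\{x\in\mathcal{X}'\}$.
   Context: Block MDP: horizon $H$; finite latent states $\mathcal{S}=\sqcup_h\mathcal{S}_h$; countable observations $\mathcal{X}=\sqcup_h\mathcal{X}_h$; finite actions $\mathcal{A}$; start distribution $\mu\in\Delta(\mathcal{S}_1)$; transitions $T(\cdot\mid s,a)\in\Delta(\mathcal{S}_{h+1})$ for $s\in\mathcal{S}_h$; emissions $q(\cdot\mid s)\in\Delta(\mathcal{X}_h)$ with pairwise disjoint supports, decoder $g^\star$. Episodes: $s_1\sim\mu$, $x_h\sim q(\cdot\mid s_h)$, agent chooses $a_h$, $s_{h+1}\sim T(\cdot\mid s_h,a_h)$. $\Upsilon$ is the set of all policies $\mathcal{X}\to\Delta(\mathcal{A})$; $\mathbb{P}_\pi(x)$ is the probability that the trajectory under $\pi$ visits $x$; optimal for $R'$ means maximizing $\mathbb{E}_\pi[\sum_hR'(x_h,a_h)]$. Observation transitions $T(x'\mid x,a)=q(x'\mid g^\star(x'))T(g^\star(x')\mid g^\star(x),a)$; for full-support $u\in\Delta(\mathcal{X}\times\mathcal{A})$, $\mathbb{P}_u(x,a\mid x')=\frac{T(x'\mid x,a)u(x,a)}{\sum_{\tilde x,\tilde a}T(x'\mid\tilde x,\tilde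 a)u(\tilde x,\tilde a)}$; $x_1',x_2'$ are backward kinematically inseparable if $\mathbb{P}_u(\cdot\mid x_1')=\mathbb{P}_u(\cdot\mid x_2')$ for every full-support $u$. *)

theory Defs
  imports "HOL-Probability.Probability"
begin

text \<open>Block MDP data: horizon H; latent states 's with layer function levS
  (state s lies in S_(levS s), layers 1..H); start distribution mu; transitions T;
  emissions q; decoder g (the layer of an observation x is levS (g x)).\<close>

definition block_mdp ::
  "nat \<Rightarrow> ('s \<Rightarrow> nat) \<Rightarrow> 's pmf \<Rightarrow> ('s \<Rightarrow> 'a \<Rightarrow> 's pmf) \<Rightarrow> ('s \<Rightarrow> 'x pmf) \<Rightarrow> ('x \<Rightarrow> 's) \<Rightarrow> bool" where
  "block_mdp H levS mu T q g \<longleftrightarrow>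
     (\<forall>s. 1 \<le> levS s \<and> levS s \<le> H) \<and>
     (\<forall>s\<in>set_pmf mu. levS s = 1) \<and>
     (\<forall>s a. levS s < H \<longrightarrow> (\<forall>s'\<in>set_pmf (T s a). levS s' = Suc (levS s))) \<and>
     (\<forall>s. \<forall>x\<in>set_pmf (q s). g x = s) \<and>
     (\<forall>x. x \<in> set_pmf (q (g x)))"

fun traj :: "('s \<Rightarrow> 'a \<Rightarrow> 's pmf) \<Rightarrow> ('s \<Rightarrow> 'x pmf) \<Rightarrow> ('x \<Rightarrow> 'a pmf) \<Rightarrow> nat \<Rightarrow> 's \<Rightarrow> ('x \<times> 'a) list pmf" where
  "traj T q pol 0 s = return_pmf []"
| "traj T q pol (Suc n) s =
     bind_pmf (q s) (\<lambda>x. bind_pmf (pol x) (\<lambda>a. bind_pmf (T s a) (\<lambda>s'.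
       map_pmf (\<lambda>rest. (x, a) # rest) (traj T q pol n s'))))"

definition episode :: "nat \<Rightarrow> 's pmf \<Rightarrow> ('s \<Rightarrow> 'a \<Rightarrow> 's pmf) \<Rightarrow> ('s \<Rightarrow> 'x pmf) \<Rightarrow> ('x \<Rightarrow> 'a pmf) \<Rightarrow> ('x \<times> 'a) list pmf" where
  "episode H mu T q pol = bind_pmf mu (traj T q pol H)"

definition visit_prob :: "nat \<Rightarrow> 's pmf \<Rightarrow> ('s \<Rightarrow> 'a \<Rightarrow> 's pmf) \<Rightarrow> ('s \<Rightarrow> 'x pmf) \<Rightarrow> ('x \<Rightarrow> 'a pmf) \<Rightarrow> 'x \<Rightarrow> real" where
  "visit_prob H mu T q pol x = measure_pmf.prob (episode H mu T q pol) {tr. x \<in> fst ` set tr}"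

definition exp_reward :: "nat \<Rightarrow> 's pmf \<Rightarrow> ('s \<Rightarrow> 'a \<Rightarrow> 's pmf) \<Rightarrow> ('s \<Rightarrow> 'x pmf) \<Rightarrow> ('x \<Rightarrow> 'a pmf) \<Rightarrow> ('x \<Rightarrow> 'a \<Rightarrow> real) \<Rightarrow> real" where
  "exp_reward H mu T q pol R = measure_pmf.expectation (episode H mu T q pol) (\<lambda>tr. sum_list (map (\<lambda>(x, a). R x a) tr))"

definition obs_trans :: "('s \<Rightarrow> 'a \<Rightarrow> 's pmf) \<Rightarrow> ('s \<Rightarrow> 'x pmf) \<Rightarrow> ('x \<Rightarrow> 's) \<Rightarrow> 'x \<Rightarrow> 'a \<Rightarrow> 'x \<Rightarrow> real" where
  "obs_trans T q g x a x' = pmf (q (g x')) x' * pmf (T (g x) a) (g x')"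

definition back_post :: "('s \<Rightarrow> 'a \<Rightarrow> 's pmf) \<Rightarrow> ('s \<Rightarrow> 'x pmf) \<Rightarrow> ('x \<Rightarrow> 's) \<Rightarrow> ('x \<times> 'a) pmf \<Rightarrow> 'x \<Rightarrow> 'x \<times> 'a \<Rightarrow> real" where
  "back_post T q g u x' p =
     obs_trans T q g (fst p) (snd p) x' * pmf u p /
     (\<Sum>\<^sub>\<infinity>p'. obs_trans T q g (fst p') (snd p') x' * pmf u p')"

definition backward_KI :: "('s \<Rightarrow> 'a \<Rightarrow> 's pmf) \<Rightarrow> ('s \<Rightarrow> 'x pmf) \<Rightarrow> ('x \<Rightarrow> 's) \<Rightarrow> 'x \<Rightarrow> 'x \<Rightarrow> bool" where
  "backward_KI T q g x1 x2 \<longleftrightarrow>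
     (\<forall>u :: ('x \<times> 'a) pmf. set_pmf u = UNIV \<longrightarrow> back_post T q g u x1 = back_post T q g u x2)"

end

theory Submission
  imports Defs
begin

text \<open>Because the observations in \<open>X'\<close> are pairwise backward kinematically inseparable, the
  observation transitions into them factor as \<open>T(x'|x,a) = c(x') w(x,a)\<close>. Emissions have
  disjoint supports and layers advance by one per step, so an episode sees each observation at
  most once, in its own layer. Hence for every \<open>A \<subseteq> X'\<close> the expected number of visits to \<open>A\<close>
  is the probability of starting in \<open>A\<close> plus the sum of \<open>c\<close> over \<open>A\<close> times the expected cumulative
  reward \<open>w\<close> collected before the last layer. A policy maximizing that single reward, which
  dynamic programming provides, therefore maximizes \<open>P\<^sub>\<pi>(x')\<close> for every \<open>x' \<in> X'\<close>
  (take \<open>A = {x'}\<close>) as well as the expected reward \<open>1{x \<in> X'}\<close> (take \<open>A = X'\<close>).\<close>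

lemma traj_levels:
  assumes bm: "block_mdp H levS mu T q g"
    and "tr \<in> set_pmf (traj T q pol n s)" and "levS s + n = Suc H"
  shows "map (\<lambda>(x, a). levS (g x)) tr = [levS s..<Suc H]"
  using assms(2,3)
proof (induction n arbitrary: s tr)
  case 0
  then show ?case using bm by (simp add: block_mdp_def)
next
  case (Suc n)
  then obtain x a s' rest where x: "x \<in> set_pmf (q s)" and s': "s' \<in> set_pmf (T s a)"
    and rest: "rest \<in> set_pmf (traj T q pol n s')" and tr: "tr = (x, a) # rest"
    by auto
  have gx: "g x = s" using bm x by (simp add: block_mdp_def)
  show ?case
  proof (cases n)
    case 0
    then show ?thesis using Suc.prems rest tr gx by simp
  next
    case (Suc m)
    then have "levS s < H" using Suc.prems by simp
    then have "levS s' = Suc (levS s)" using bm s' by (simp add: block_mdp_def)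
    then show ?thesis using Suc.IH[OF rest] Suc.prems tr gx by (simp add: upt_conv_Cons)
  qed
qed

lemma episode_levels:
  assumes "block_mdp H levS mu T q g" and "tr \<in> set_pmf (episode H mu T q pol)"
  shows "map (\<lambda>(x, a). levS (g x)) tr = [1..<Suc H]"
proof -
  from assms(2) obtain s where s: "s \<in> set_pmf mu" and "tr \<in> set_pmf (traj T q pol H s)"
    by (auto simp: episode_def)
  moreover have "levS s = 1" using assms(1) s by (simp add: block_mdp_def)
  ultimately show ?thesis using traj_levels[OF assms(1)] by fastforce
qed

lemma episode_length:
  assumes "block_mdp H levS mu T q g" and "tr \<in> set_pmf (episode H mu T q pol)"
  shows "length tr = H"
  using arg_cong[OF episode_levels[OF assms], of length] by simp

lemma episode_distinct_obs:
  assumes "block_mdp H levS mu T q g" and "tr \<in> set_pmf (episode H mu T q pol)"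
  shows "distinct (map fst tr)"
proof -
  have "distinct (map (\<lambda>x. levS (g x)) (map fst tr))"
    using episode_levels[OF assms] by (simp add: case_prod_unfold comp_def)
  then show ?thesis using distinct_map by blast
qed

definition reward_sum :: "('x \<Rightarrow> 'a \<Rightarrow> ennreal) \<Rightarrow> ('x \<times> 'a) list \<Rightarrow> ennreal" where
  "reward_sum R tr = (\<Sum>(x, a)\<leftarrow>tr. R x a)"

lemma reward_sum_Nil [simp]: "reward_sum R [] = 0"
  and reward_sum_Cons [simp]: "reward_sum R ((x, a) # tr) = R x a + reward_sum R tr"
  by (simp_all add: reward_sum_def)

lemma reward_sum_cmult: "reward_sum (\<lambda>x a. c * R x a) tr = c * reward_sum R tr"
  by (simp add: reward_sum_def case_prod_unfold sum_list_const_mult)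

definition traj_value ::
  "('s \<Rightarrow> 'a \<Rightarrow> 's pmf) \<Rightarrow> ('s \<Rightarrow> 'x pmf) \<Rightarrow> ('x \<Rightarrow> 'a pmf) \<Rightarrow> ('x \<Rightarrow> 'a \<Rightarrow> ennreal) \<Rightarrow> nat \<Rightarrow> 's \<Rightarrow> ennreal"
  where "traj_value T q pol R n s = (\<integral>\<^sup>+tr. reward_sum R tr \<partial>measure_pmf (traj T q pol n s))"

definition policy_value ::
  "nat \<Rightarrow> 's pmf \<Rightarrow> ('s \<Rightarrow> 'a \<Rightarrow> 's pmf) \<Rightarrow> ('s \<Rightarrow> 'x pmf) \<Rightarrow> ('x \<Rightarrow> 'a pmf) \<Rightarrow> ('x \<Rightarrow> 'a \<Rightarrow> ennreal) \<Rightarrow> ennreal"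
  where "policy_value H mu T q pol R = (\<integral>\<^sup>+tr. reward_sum R tr \<partial>measure_pmf (episode H mu T q pol))"

lemma traj_value_0 [simp]: "traj_value T q pol R 0 s = 0"
  by (simp add: traj_value_def)

lemma traj_value_Suc:
  "traj_value T q pol R (Suc n) s =
     (\<integral>\<^sup>+x. \<integral>\<^sup>+a. R x a + (\<integral>\<^sup>+s'. traj_value T q pol R n s' \<partial>measure_pmf (T s a))
        \<partial>measure_pmf (pol x) \<partial>measure_pmf (q s))"
  by (simp add: traj_value_def nn_integral_add)

lemma policy_value_eq_traj_value:
  "policy_value H mu T q pol R = (\<integral>\<^sup>+s. traj_value T q pol R H s \<partial>measure_pmf mu)"
  by (simp add: policy_value_def traj_value_def episode_def)

lemma policy_value_cmult:
  "policy_value H mu T q pol (\<lambda>x a. c * R x a) = c * policy_value H mu T q pol R"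
  by (simp add: policy_value_def reward_sum_cmult nn_integral_cmult)

section \<open>Optimal policies by dynamic programming\<close>

lemma arg_max_attains_Max:
  fixes f :: "'a::finite \<Rightarrow> 'b::linorder"
  shows "f (ARG_MAX f a. True) = (MAX a. f a)"
proof -
  have "(MAX a. f a) \<in> range f" by (rule Max_in) auto
  then obtain k where k: "f k = (MAX a. f a)" by (metis rangeE)
  then have "f (ARG_MAX f a. True) = f k"
    by (intro arg_max_equality) auto
  then show ?thesis using k by simp
qed

primrec opt_value ::
  "('s \<Rightarrow> 'a::finite \<Rightarrow> 's pmf) \<Rightarrow> ('s \<Rightarrow> 'x pmf) \<Rightarrow> ('x \<Rightarrow> 's) \<Rightarrow> ('x \<Rightarrow> 'a \<Rightarrow> ennreal) \<Rightarrow> nat \<Rightarrow> 's \<Rightarrow> ennreal"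
  where
  "opt_value T q g R 0 s = 0"
| "opt_value T q g R (Suc n) s =
     (\<integral>\<^sup>+x. (MAX a. R x a + (\<integral>\<^sup>+s'. opt_value T q g R n s' \<partial>measure_pmf (T (g x) a))) \<partial>measure_pmf (q s))"

definition opt_q ::
  "('s \<Rightarrow> 'a::finite \<Rightarrow> 's pmf) \<Rightarrow> ('s \<Rightarrow> 'x pmf) \<Rightarrow> ('x \<Rightarrow> 's) \<Rightarrow> ('x \<Rightarrow> 'a \<Rightarrow> ennreal) \<Rightarrow> nat \<Rightarrow> 'x \<Rightarrow> 'a \<Rightarrow> ennreal"
  where "opt_q T q g R n x a = R x a + (\<integral>\<^sup>+s'. opt_value T q g R n s' \<partial>measure_pmf (T (g x) a))"

lemma opt_value_Suc_opt_q:
  "opt_value T q g R (Suc n) s = (\<integral>\<^sup>+x. (MAX a. opt_q T q g R n x a) \<partial>measure_pmf (q s))"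
  by (simp add: opt_q_def)

text \<open>\<open>H - levS (g x)\<close> is the number of steps that follow the one taken at \<open>x\<close>.\<close>

definition greedy_policy ::
  "nat \<Rightarrow> ('s \<Rightarrow> nat) \<Rightarrow> ('s \<Rightarrow> 'a::finite \<Rightarrow> 's pmf) \<Rightarrow> ('s \<Rightarrow> 'x pmf) \<Rightarrow> ('x \<Rightarrow> 's) \<Rightarrow> ('x \<Rightarrow> 'a \<Rightarrow> ennreal) \<Rightarrow> 'x \<Rightarrow> 'a pmf"
  where "greedy_policy H levS T q g R x =
    return_pmf (ARG_MAX (opt_q T q g R (H - levS (g x)) x) a. True)"

lemma traj_value_le_opt_value:
  assumes bm: "block_mdp H levS mu T q g"
  shows "traj_value T q pol R n s \<le> opt_value T q g R n s"
proof (induction n arbitrary: s)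
  case (Suc n)
  have "traj_value T q pol R (Suc n) s \<le> (\<integral>\<^sup>+x. (MAX a. opt_q T q g R n x a) \<partial>measure_pmf (q s))"
    unfolding traj_value_Suc
  proof (rule nn_integral_mono_AE, unfold AE_measure_pmf_iff, intro ballI)
    fix x assume "x \<in> set_pmf (q s)"
    then have gx: "g x = s" using bm by (simp add: block_mdp_def)
    have bound: "R x a + (\<integral>\<^sup>+s'. traj_value T q pol R n s' \<partial>measure_pmf (T s a))
        \<le> (MAX a. opt_q T q g R n x a)" for a
    proof -
      have "R x a + (\<integral>\<^sup>+s'. traj_value T q pol R n s' \<partial>measure_pmf (T s a)) \<le> opt_q T q g R n x a"
        unfolding opt_q_def gx by (intro add_left_mono nn_integral_mono Suc.IH)
      also have "\<dots> \<le> (MAX a. opt_q T q g R n x a)" by simp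
      finally show ?thesis .
    qed
    have "(\<integral>\<^sup>+a. R x a + (\<integral>\<^sup>+s'. traj_value T q pol R n s' \<partial>measure_pmf (T s a)) \<partial>measure_pmf (pol x))
        \<le> (\<integral>\<^sup>+a. (MAX a. opt_q T q g R n x a) \<partial>measure_pmf (pol x))"
      by (intro nn_integral_mono bound)
    then show "(\<integral>\<^sup>+a. R x a + (\<integral>\<^sup>+s'. traj_value T q pol R n s' \<partial>measure_pmf (T s a)) \<partial>measure_pmf (pol x))
        \<le> (MAX a. opt_q T q g R n x a)"
      by simp
  qed
  then show ?case by (simp only: opt_value_Suc_opt_q)
qed simp

lemma traj_value_greedy_policy:
  assumes bm: "block_mdp H levS mu T q g" and "levS s + n = Suc H"
  shows "traj_value T q (greedy_policy H levS T q g R) R n s = opt_value T q g R n s"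
  using assms(2)
proof (induction n arbitrary: s)
  case (Suc n)
  let ?pol = "greedy_policy H levS T q g R"
  have IH': "traj_value T q ?pol R n s' = opt_value T q g R n s'" if "s' \<in> set_pmf (T s a)" for s' a
  proof (cases n)
    case (Suc m)
    then have "levS s < H" using Suc.prems by simp
    then have "levS s' = Suc (levS s)" using bm that by (simp add: block_mdp_def)
    then show ?thesis using Suc.IH Suc.prems by simp
  qed simp
  have "traj_value T q ?pol R (Suc n) s = (\<integral>\<^sup>+x. (MAX a. opt_q T q g R n x a) \<partial>measure_pmf (q s))"
    unfolding traj_value_Suc
  proof (rule nn_integral_cong_AE, unfold AE_measure_pmf_iff, intro ballI)
    fix x assume "x \<in> set_pmf (q s)"
    then have gx: "g x = s" using bm by (simp add: block_mdp_def)
    define a\<^sub>0 where "a\<^sub>0 = (ARG_MAX (opt_q T q g R n x) a. True)"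
    have "H - levS (g x) = n" using gx Suc.prems by simp
    then have "?pol x = return_pmf a\<^sub>0" by (simp add: greedy_policy_def a\<^sub>0_def)
    then have "(\<integral>\<^sup>+a. R x a + (\<integral>\<^sup>+s'. traj_value T q ?pol R n s' \<partial>measure_pmf (T s a)) \<partial>measure_pmf (?pol x))
        = R x a\<^sub>0 + (\<integral>\<^sup>+s'. traj_value T q ?pol R n s' \<partial>measure_pmf (T s a\<^sub>0))"
      by simp
    also have "\<dots> = opt_q T q g R n x a\<^sub>0"
      unfolding opt_q_def gx using IH' by (simp add: nn_integral_cong_AE AE_measure_pmf_iff)
    also have "\<dots> = (MAX a. opt_q T q g R n x a)"
      unfolding a\<^sub>0_def by (rule arg_max_attains_Max)
    finally show "(\<integral>\<^sup>+a. R x a + (\<integral>\<^sup>+s'. traj_value T q ?pol R n s' \<partial>measure_pmf (T s a)) \<partial>measure_pmf (?pol x))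
        = (MAX a. opt_q T q g R n x a)" .
  qed
  then show ?case by (simp only: opt_value_Suc_opt_q)
qed simp

theorem greedy_policy_optimal:
  assumes "block_mdp H levS mu T q g"
  shows "policy_value H mu T q pol R \<le> policy_value H mu T q (greedy_policy H levS T q g R) R"
proof -
  have "policy_value H mu T q pol R \<le> (\<integral>\<^sup>+s. opt_value T q g R H s \<partial>measure_pmf mu)"
    unfolding policy_value_eq_traj_value
    by (intro nn_integral_mono traj_value_le_opt_value[OF assms])
  also have "\<dots> = policy_value H mu T q (greedy_policy H levS T q g R) R"
    unfolding policy_value_eq_traj_value
    using assms traj_value_greedy_policy[OF assms]
    by (intro nn_integral_cong_AE) (simp add: AE_measure_pmf_iff block_mdp_def)
  finally show ?thesis .
qed

section \<open>Expected visits\<close>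

definition next_obs_value ::
  "nat \<Rightarrow> ('s \<Rightarrow> nat) \<Rightarrow> ('s \<Rightarrow> 'a \<Rightarrow> 's pmf) \<Rightarrow> ('s \<Rightarrow> 'x pmf) \<Rightarrow> ('x \<Rightarrow> 's) \<Rightarrow> ('x \<Rightarrow> ennreal) \<Rightarrow> 'x \<Rightarrow> 'a \<Rightarrow> ennreal"
  where "next_obs_value H levS T q g \<phi> y a =
    (if levS (g y) < H then \<integral>\<^sup>+x. \<phi> x \<partial>measure_pmf (bind_pmf (T (g y) a) q) else 0)"

lemma traj_value_obs_shift:
  assumes bm: "block_mdp H levS mu T q g" and "levS s + n = Suc H"
  shows "traj_value T q pol (\<lambda>x a. \<phi> x) n s =
    (\<integral>\<^sup>+x. \<phi> x \<partial>measure_pmf (q s)) + traj_value T q pol (next_obs_value H levS T q g \<phi>) n s"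
  using assms(2)
proof (induction n arbitrary: s)
  case 0
  then show ?case using bm by (simp add: block_mdp_def) (metis Suc_n_not_le_n)
next
  case (Suc n)
  let ?\<psi> = "next_obs_value H levS T q g \<phi>"
  have step: "(\<integral>\<^sup>+s'. traj_value T q pol (\<lambda>x a. \<phi> x) n s' \<partial>measure_pmf (T s a))
      = ?\<psi> x a + (\<integral>\<^sup>+s'. traj_value T q pol ?\<psi> n s' \<partial>measure_pmf (T s a))"
    if "x \<in> set_pmf (q s)" for x a
  proof -
    have gx: "g x = s" using bm that by (simp add: block_mdp_def)
    show ?thesis
    proof (cases n)
      case 0
      then show ?thesis using gx Suc.prems by (simp add: next_obs_value_def)
    next
      case (Suc m)
      then have lt: "levS s < H" using Suc.prems by simp
      have "(\<integral>\<^sup>+s'. traj_value T q pol (\<lambda>x a. \<phi> x) n s' \<partial>measure_pmf (T s a))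
          = (\<integral>\<^sup>+s'. (\<integral>\<^sup>+x. \<phi> x \<partial>measure_pmf (q s')) + traj_value T q pol ?\<psi> n s' \<partial>measure_pmf (T s a))"
      proof (rule nn_integral_cong_AE, unfold AE_measure_pmf_iff, intro ballI)
        fix s' assume "s' \<in> set_pmf (T s a)"
        then have "levS s' + n = Suc H" using bm lt Suc.prems by (simp add: block_mdp_def)
        then show "traj_value T q pol (\<lambda>x a. \<phi> x) n s'
            = (\<integral>\<^sup>+x. \<phi> x \<partial>measure_pmf (q s')) + traj_value T q pol ?\<psi> n s'"
          by (rule Suc.IH)
      qed
      also have "\<dots> = ?\<psi> x a + (\<integral>\<^sup>+s'. traj_value T q pol ?\<psi> n s' \<partial>measure_pmf (T s a))"
        using gx lt by (simp add: nn_integral_add next_obs_value_def)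
      finally show ?thesis .
    qed
  qed
  have "traj_value T q pol (\<lambda>x a. \<phi> x) (Suc n) s
      = (\<integral>\<^sup>+x. \<phi> x + (\<integral>\<^sup>+a. ?\<psi> x a + (\<integral>\<^sup>+s'. traj_value T q pol ?\<psi> n s' \<partial>measure_pmf (T s a))
          \<partial>measure_pmf (pol x)) \<partial>measure_pmf (q s))"
    unfolding traj_value_Suc
    by (intro nn_integral_cong_AE) (simp add: AE_measure_pmf_iff step nn_integral_add add.assoc)
  also have "\<dots> = (\<integral>\<^sup>+x. \<phi> x \<partial>measure_pmf (q s)) + traj_value T q pol ?\<psi> (Suc n) s"
    unfolding traj_value_Suc by (simp add: nn_integral_add)
  finally show ?case .
qed

lemma policy_value_obs_shift:
  assumes "block_mdp H levS mu T q g"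
  shows "policy_value H mu T q pol (\<lambda>x a. \<phi> x) =
    (\<integral>\<^sup>+s. \<integral>\<^sup>+x. \<phi> x \<partial>measure_pmf (q s) \<partial>measure_pmf mu)
      + policy_value H mu T q pol (next_obs_value H levS T q g \<phi>)"
proof -
  have "policy_value H mu T q pol (\<lambda>x a. \<phi> x) = (\<integral>\<^sup>+s. (\<integral>\<^sup>+x. \<phi> x \<partial>measure_pmf (q s))
      + traj_value T q pol (next_obs_value H levS T q g \<phi>) H s \<partial>measure_pmf mu)"
    unfolding policy_value_eq_traj_value using assms traj_value_obs_shift[OF assms]
    by (intro nn_integral_cong_AE) (simp add: AE_measure_pmf_iff block_mdp_def)
  then show ?thesis by (simp add: nn_integral_add policy_value_eq_traj_value)
qed

section \<open>Factorization of transitions into inseparable observations\<close>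

lemma full_support_pmf_exists: "\<exists>u :: 'a::countable pmf. set_pmf u = UNIV"
proof
  show "set_pmf (map_pmf from_nat (geometric_pmf (1/2))) = (UNIV :: 'a set)"
    by (auto simp: set_pmf_geometric image_iff intro: exI[of _ "to_nat _"])
qed

lemma obs_trans_nonneg: "0 \<le> obs_trans T q g y a x"
  by (simp add: obs_trans_def)

lemma obs_trans_le_1: "obs_trans T q g y a x \<le> 1"
  unfolding obs_trans_def by (intro mult_le_one pmf_le_1 pmf_nonneg)

lemma obs_trans_eq_back_post:
  fixes u :: "('x \<times> 'a) pmf" and T :: "'s \<Rightarrow> 'a \<Rightarrow> 's pmf" and q :: "'s \<Rightarrow> 'x pmf"
    and g :: "'x \<Rightarrow> 's" and x :: 'x
  assumes u: "0 < pmf u (y, a)"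
  defines "Z \<equiv> (\<Sum>\<^sub>\<infinity>p. obs_trans T q g (fst p) (snd p) x * pmf u p)"
  shows "obs_trans T q g y a x = Z * back_post T q g u x (y, a) / pmf u (y, a)"
proof (cases "Z = 0")
  case True
  have "Infinite_Sum.abs_summable_on (pmf u) UNIV"
    using pmf_abs_summable[of u UNIV] abs_summable_equivalent by blast
  then have "(\<lambda>p. pmf u p) summable_on UNIV"
    by (rule abs_summable_summable)
  then have "(\<lambda>p. obs_trans T q g (fst p) (snd p) x * pmf u p) summable_on UNIV"
    by (rule summable_on_comparison_test)
       (simp_all add: obs_trans_nonneg obs_trans_le_1 mult_left_le_one_le)
  then have "obs_trans T q g y a x * pmf u (y, a) = 0"
    using nonneg_infsum_le_0D[of "\<lambda>p. obs_trans T q g (fst p) (snd p) x * pmf u p" UNIV "(y, a)"] True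
    by (simp add: Z_def obs_trans_nonneg)
  then show ?thesis using u True by simp
next
  case False
  then show ?thesis using u by (simp add: back_post_def Z_def[symmetric])
qed

lemma backward_KI_factorization:
  fixes T :: "'s \<Rightarrow> 'a::countable \<Rightarrow> 's pmf" and q :: "'s \<Rightarrow> 'x::countable pmf"
  assumes "\<forall>x1\<in>X'. \<forall>x2\<in>X'. backward_KI T q g x1 x2"
  obtains c :: "'x \<Rightarrow> real" and w :: "'x \<Rightarrow> 'a \<Rightarrow> real"
  where "\<And>x. 0 \<le> c x" and "\<And>y a. 0 \<le> w y a"
    and "\<And>x y a. x \<in> X' \<Longrightarrow> obs_trans T q g y a x = c x * w y a"
proof -
  obtain u :: "('x \<times> 'a) pmf" where u: "set_pmf u = UNIV"
    using full_support_pmf_exists by blast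
  then have u_pos: "0 < pmf u p" for p
    by (metis UNIV_I pmf_positive)
  txt \<open>By \<open>obs_trans_eq_back_post\<close>, \<open>T(x|y,a)\<close> is the evidence of \<open>x\<close> times the posterior
    \<open>P\<^sub>u((y,a)|x)/u(y,a)\<close>, and inseparability makes the posterior the same for all \<open>x \<in> X'\<close>.\<close>
  define x\<^sub>0 where "x\<^sub>0 = (SOME x. x \<in> X')"
  define c where "c x = (\<Sum>\<^sub>\<infinity>p. obs_trans T q g (fst p) (snd p) x * pmf u p)" for x
  define w where "w y a = back_post T q g u x\<^sub>0 (y, a) / pmf u (y, a)" for y a
  show ?thesis
  proof
    show "0 \<le> c x" for x
      unfolding c_def by (intro infsum_nonneg) (simp add: obs_trans_nonneg)
    show "0 \<le> w y a" for y a
      unfolding w_def back_post_def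
      by (intro divide_nonneg_nonneg mult_nonneg_nonneg infsum_nonneg) (simp_all add: obs_trans_nonneg)
    fix x y a assume "x \<in> X'"
    then have "back_post T q g u x = back_post T q g u x\<^sub>0"
      using assms u unfolding x\<^sub>0_def backward_KI_def by (metis someI)
    moreover have "obs_trans T q g y a x = c x * back_post T q g u x (y, a) / pmf u (y, a)"
      unfolding c_def by (rule obs_trans_eq_back_post[OF u_pos])
    ultimately show "obs_trans T q g y a x = c x * w y a"
      by (simp add: w_def)
  qed
qed

lemma pmf_next_obs:
  assumes "block_mdp H levS mu T q g"
  shows "pmf (bind_pmf (T (g y) a) q) x = obs_trans T q g y a x"
proof -
  have emission: "ennreal (pmf (q s') x) = ennreal (pmf (q (g x)) x) * indicator {g x} s'" for s'
  proof (cases "s' = g x")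
    case False
    then have "x \<notin> set_pmf (q s')" using assms by (auto simp: block_mdp_def)
    then show ?thesis using False by (simp add: set_pmf_iff)
  qed simp
  have "ennreal (pmf (bind_pmf (T (g y) a) q) x) = (\<integral>\<^sup>+s'. ennreal (pmf (q s') x) \<partial>measure_pmf (T (g y) a))"
    by (rule ennreal_pmf_bind)
  also have "\<dots> = (\<integral>\<^sup>+s'. ennreal (pmf (q (g x)) x) * indicator {g x} s' \<partial>measure_pmf (T (g y) a))"
    by (intro nn_integral_cong emission)
  also have "\<dots> = ennreal (obs_trans T q g y a x)"
    by (simp add: nn_integral_cmult emeasure_pmf_single obs_trans_def ennreal_mult)
  finally show ?thesis by (simp add: obs_trans_nonneg)
qed

lemma next_obs_value_indicator_factor:
  assumes bm: "block_mdp H levS mu T q g"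
    and cw: "\<And>x y a. x \<in> A \<Longrightarrow> obs_trans T q g y a x = c x * w y a"
    and c: "\<And>x. 0 \<le> c x" and w: "\<And>y a. 0 \<le> w y a"
  shows "next_obs_value H levS T q g (indicator A) y a =
    (\<integral>\<^sup>+x\<in>A. ennreal (c x) \<partial>count_space UNIV) * (if levS (g y) < H then ennreal (w y a) else 0)"
proof -
  have "(\<integral>\<^sup>+x. indicator A x \<partial>measure_pmf (bind_pmf (T (g y) a) q))
      = (\<integral>\<^sup>+x. ennreal (obs_trans T q g y a x) * indicator A x \<partial>count_space UNIV)"
    by (simp add: nn_integral_measure_pmf pmf_next_obs[OF bm])
  also have "\<dots> = (\<integral>\<^sup>+x. ennreal (c x) * indicator A x * ennreal (w y a) \<partial>count_space UNIV)"
    by (intro nn_integral_cong) (simp add: cw c w ennreal_mult indicator_def)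
  also have "\<dots> = (\<integral>\<^sup>+x\<in>A. ennreal (c x) \<partial>count_space UNIV) * ennreal (w y a)"
    by (simp add: nn_integral_multc)
  finally show ?thesis by (simp add: next_obs_value_def)
qed

theorem greedy_policy_maximizes_visits:
  assumes bm: "block_mdp H levS mu T q g"
    and cw: "\<And>x y a. x \<in> A \<Longrightarrow> obs_trans T q g y a x = c x * w y a"
    and c: "\<And>x. 0 \<le> c x" and w: "\<And>y a. 0 \<le> w y a"
  defines "r \<equiv> \<lambda>y a. if levS (g y) < H then ennreal (w y a) else 0"
  shows "policy_value H mu T q pol (\<lambda>x a. indicator A x)
    \<le> policy_value H mu T q (greedy_policy H levS T q g r) (\<lambda>x a. indicator A x)"
proof -
  have "next_obs_value H levS T q g (indicator A) = (\<lambda>y a. (\<integral>\<^sup>+x\<in>A. ennreal (c x) \<partial>count_space UNIV) * r y a)"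
    unfolding r_def by (intro ext next_obs_value_indicator_factor[OF bm cw c w])
  then show ?thesis
    by (simp add: policy_value_obs_shift[OF bm] policy_value_cmult add_left_mono mult_left_mono
                  greedy_policy_optimal[OF bm])
qed

lemma reward_sum_indicator_distinct:
  assumes "distinct (map fst tr)"
  shows "reward_sum (\<lambda>y a. indicator {x} y) tr = indicator {tr. x \<in> fst ` set tr} tr"
  using assms
proof (induction tr)
  case (Cons p tr)
  obtain y a where "p = (y, a)" by fastforce
  with Cons show ?case by (cases "y = x") (auto simp: image_iff indicator_def)
qed simp

lemma visit_prob_eq_policy_value:
  assumes "block_mdp H levS mu T q g"
  shows "ennreal (visit_prob H mu T q pol x) = policy_value H mu T q pol (\<lambda>y a. indicator {x} y)"
proof -
  have "ennreal (visit_prob H mu T q pol x)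
      = (\<integral>\<^sup>+tr. indicator {tr. x \<in> fst ` set tr} tr \<partial>measure_pmf (episode H mu T q pol))"
    by (simp add: visit_prob_def measure_pmf.emeasure_eq_measure[symmetric])
  also have "\<dots> = policy_value H mu T q pol (\<lambda>y a. indicator {x} y)"
    unfolding policy_value_def
    by (intro nn_integral_cong_AE)
       (simp add: AE_measure_pmf_iff reward_sum_indicator_distinct episode_distinct_obs[OF assms])
  finally show ?thesis .
qed

lemma sum_list_reward_nonneg:
  fixes R :: "'x \<Rightarrow> 'a \<Rightarrow> real"
  assumes "\<And>x a. 0 \<le> R x a"
  shows "0 \<le> (\<Sum>(x, a)\<leftarrow>tr. R x a)"
  by (induction tr) (auto simp: assms)

lemma sum_list_reward_le:
  fixes R :: "'x \<Rightarrow> 'a \<Rightarrow> real"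
  assumes "\<And>x a. R x a \<le> B"
  shows "(\<Sum>(x, a)\<leftarrow>tr. R x a) \<le> real (length tr) * B"
  by (induction tr) (auto simp: assms algebra_simps intro: add_mono)

lemma ennreal_sum_list_reward:
  assumes "\<And>x a. 0 \<le> R x a"
  shows "ennreal (\<Sum>(x, a)\<leftarrow>tr. R x a) = reward_sum (\<lambda>x a. ennreal (R x a)) tr"
  by (induction tr) (auto simp: assms sum_list_reward_nonneg)

lemma exp_reward_eq_policy_value:
  assumes bm: "block_mdp H levS mu T q g" and R: "\<And>x a. 0 \<le> R x a" "\<And>x a. R x a \<le> B"
  shows "ennreal (exp_reward H mu T q pol R) = policy_value H mu T q pol (\<lambda>x a. ennreal (R x a))"
proof -
  let ?ret = "\<lambda>tr. \<Sum>(x, a)\<leftarrow>tr. R x a"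
  have "norm (?ret tr) \<le> real H * B" if "tr \<in> set_pmf (episode H mu T q pol)" for tr
    using sum_list_reward_le[of R B tr] sum_list_reward_nonneg[of R tr] episode_length[OF bm that] R
    by simp
  then have "integrable (measure_pmf (episode H mu T q pol)) ?ret"
    by (intro measure_pmf.integrable_const_bound[where B = "real H * B"]) (simp_all add: AE_measure_pmf_iff)
  then have "(\<integral>\<^sup>+tr. ennreal (?ret tr) \<partial>measure_pmf (episode H mu T q pol))
      = ennreal (exp_reward H mu T q pol R)"
    unfolding exp_reward_def by (rule nn_integral_eq_integral) (simp add: R(1) sum_list_reward_nonneg)
  then show ?thesis
    by (simp add: policy_value_def ennreal_sum_list_reward[OF R(1)])
qed

lemma exp_reward_nonneg:
  fixes R :: "'x \<Rightarrow> 'a \<Rightarrow> real"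
  assumes "\<And>x a. 0 \<le> R x a"
  shows "0 \<le> exp_reward H mu T q pol R"
  unfolding exp_reward_def by (intro integral_nonneg_AE AE_I2 sum_list_reward_nonneg assms)

lemma exp_reward_indicator_eq_policy_value:
  assumes "block_mdp H levS mu T q g"
  shows "ennreal (exp_reward H mu T q pol (\<lambda>x a. if x \<in> A then 1 else 0))
    = policy_value H mu T q pol (\<lambda>x a. indicator A x)"
proof -
  have "ennreal (exp_reward H mu T q pol (\<lambda>x a. if x \<in> A then 1 else 0))
      = policy_value H mu T q pol (\<lambda>x a. ennreal (if x \<in> A then 1 else 0))"
    by (rule exp_reward_eq_policy_value[OF assms, where B = 1]) simp_all
  also have "(\<lambda>x a. ennreal (if x \<in> A then 1 else 0)) = (\<lambda>x (a :: 'a). indicator A x)"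
    by (simp add: fun_eq_iff indicator_def)
  finally show ?thesis .
qed

theorem mainTheorem7:
  fixes H :: nat and levS :: "'s::finite \<Rightarrow> nat" and mu :: "'s pmf"
    and T :: "'s \<Rightarrow> 'a::finite \<Rightarrow> 's pmf" and q :: "'s \<Rightarrow> 'x::countable pmf"
    and g :: "'x \<Rightarrow> 's" and X' :: "'x set"
  assumes "block_mdp H levS mu T q g"
    and "\<forall>x1\<in>X'. \<forall>x2\<in>X'. backward_KI T q g x1 x2"
  shows "\<exists>pol :: 'x \<Rightarrow> 'a pmf.
           (\<forall>x'\<in>X'. \<forall>pol'. visit_prob H mu T q pol' x' \<le> visit_prob H mu T q pol x') \<and>
           (\<forall>pol'. exp_reward H mu T q pol' (\<lambda>x a. if x \<in> X' then 1 else 0)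
                  \<le> exp_reward H mu T q pol (\<lambda>x a. if x \<in> X' then 1 else 0))"
proof -
  note bm = assms(1)
  obtain c w where c: "\<And>x. 0 \<le> c x" and w: "\<And>y a. 0 \<le> w y a"
    and cw: "\<And>x y a. x \<in> X' \<Longrightarrow> obs_trans T q g y a x = c x * w y a"
    using backward_KI_factorization[OF assms(2)] by blast
  define pol where "pol = greedy_policy H levS T q g (\<lambda>y a. if levS (g y) < H then ennreal (w y a) else 0)"
  have visits: "policy_value H mu T q pol' (\<lambda>x a. indicator A x) \<le> policy_value H mu T q pol (\<lambda>x a. indicator A x)"
    if "A \<subseteq> X'" for A pol'
    unfolding pol_def using that by (intro greedy_policy_maximizes_visits[OF bm _ c w]) (auto intro: cw)
  let ?R = "\<lambda>x a. if x \<in> X' then 1 else (0 :: real)"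
  show ?thesis
  proof (intro exI[of _ pol] conjI ballI allI)
    fix x' pol' assume "x' \<in> X'"
    then show "visit_prob H mu T q pol' x' \<le> visit_prob H mu T q pol x'"
      using visits[of "{x'}"] by (simp add: visit_prob_eq_policy_value[OF bm, symmetric] visit_prob_def)
  next
    fix pol'
    have "0 \<le> exp_reward H mu T q pol ?R"
      by (rule exp_reward_nonneg) simp
    then show "exp_reward H mu T q pol' ?R \<le> exp_reward H mu T q pol ?R"
      using visits[of X'] by (simp add: exp_reward_indicator_eq_policy_value[OF bm, symmetric])
  qed
qed

end
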